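(* Let $\rho$ be a locally absolutely continuous function quasi-norm with the Fatou property over a $\sigma$-finite measure space $(\Omega,\Sigma,\mu)$, and let $(\Theta,\mathcal{T},\nu)$ be another $\sigma$-finite measure space. Let $f\colon\Omega\times\Theta\to[0,\infty]$ and $g\colon\Theta\times\Omega\to[0,\infty]$ be measurable with respect to the product $\sigma$-algebras. Then the functions $\Theta\to[0,\infty]$ given by $\theta\mapsto\rho(f(\cdot,\theta))$ and $\theta\mapsto\rho(g(\theta,\cdot))$ are measurable.
   Context: $L_0^+(\mu)$: measurable functions $\Omega\to[0,\infty]$ modulo a.e. equality. A function quasi-norm is $\rho\colon L_0^+(\mu)\to[0,\infty]$ with (F1) $\rho(tf)=t\rho(f)$, $t\ge0$; (F2) $f\le g$ a.e. $\Rightarrow\rho(f)\le\rho(g)$; (F3) $\rho(\chi_E)<\infty$ if $\mu(E)<\infty$; (F4) for all $E$ with $\mu(E)<\infty$ and $\varepsilon>0$ there is $\delta>0$ with $\mu(A)\le\varepsilon$ whenever $A\subseteq E$ measurable and $\rho(\chi_A)\le\delta$; (F5) $\rho(f+g)\le\kappa(\rho(f)+\rho(g))$. Fatou property: $\rho(\lim f_n)\le\lim\rho(f_n)$ for non-decreasing $(f_n)$. $h\in L_0^+(\mu)$ with $\rho(h)<\infty$ is absolutely continuous if $\lim_n\rho(f_n)=\rho(\lim_nf_n)$ for every non-increasing $(f_n)$ in $L_0^+(\mu)$ with $f_1\le h$; $\rho$ is locally absolutely continuous if $\chi_E$ is absolutely continuous for every $E\in\Sigma$ with $\mu(E)<\infty$.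 *)

theory Defs
  imports "HOL-Analysis.Analysis"
begin

text \<open>Elements of L_0^+(mu) are represented by Borel-measurable functions
  into ennreal; a functional rho on them is only considered on measurable arguments.
  Invariance under a.e. equality follows from (F2), stated with a.e. inequality.\<close>

definition function_quasi_norm :: "'a measure \<Rightarrow> (('a \<Rightarrow> ennreal) \<Rightarrow> ennreal) \<Rightarrow> bool" where
  "function_quasi_norm M \<rho> \<longleftrightarrow>
     (\<forall>f \<in> borel_measurable M. \<forall>t::real. t \<ge> 0 \<longrightarrow>
         \<rho> (\<lambda>x. ennreal t * f x) = ennreal t * \<rho> f) \<and>
     (\<forall>f \<in> borel_measurable M. \<forall>g \<in> borel_measurable M.
         (AE x in M. f x \<le> g x) \<longrightarrow> \<rho> f \<le> \<rho> g) \<and>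
     (\<forall>E \<in> sets M. emeasure M E < \<infinity> \<longrightarrow> \<rho> (indicator E) < \<infinity>) \<and>
     (\<forall>E \<in> sets M. emeasure M E < \<infinity> \<longrightarrow>
        (\<forall>\<epsilon>::real. \<epsilon> > 0 \<longrightarrow> (\<exists>\<delta>::real. \<delta> > 0 \<and>
           (\<forall>A \<in> sets M. A \<subseteq> E \<longrightarrow> \<rho> (indicator A) \<le> ennreal \<delta>
               \<longrightarrow> emeasure M A \<le> ennreal \<epsilon>)))) \<and>
     (\<exists>\<kappa>::real. \<kappa> \<ge> 1 \<and> (\<forall>f \<in> borel_measurable M. \<forall>g \<in> borel_measurable M.
         \<rho> (\<lambda>x. f x + g x) \<le> ennreal \<kappa> * (\<rho> f + \<rho> g)))"

definition fatou_property :: "'a measure \<Rightarrow> (('a \<Rightarrow> ennreal) \<Rightarrow> ennreal) \<Rightarrow> bool" where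
  "fatou_property M \<rho> \<longleftrightarrow>
     (\<forall>F :: nat \<Rightarrow> 'a \<Rightarrow> ennreal. (\<forall>n. F n \<in> borel_measurable M) \<longrightarrow>
        (AE x in M. incseq (\<lambda>n. F n x)) \<longrightarrow>
        \<rho> (\<lambda>x. SUP n. F n x) \<le> (SUP n. \<rho> (F n)))"

definition qn_absolutely_continuous ::
  "'a measure \<Rightarrow> (('a \<Rightarrow> ennreal) \<Rightarrow> ennreal) \<Rightarrow> ('a \<Rightarrow> ennreal) \<Rightarrow> bool" where
  "qn_absolutely_continuous M \<rho> h \<longleftrightarrow>
     h \<in> borel_measurable M \<and> \<rho> h < \<infinity> \<and>
     (\<forall>F :: nat \<Rightarrow> 'a \<Rightarrow> ennreal. (\<forall>n. F n \<in> borel_measurable M) \<longrightarrow>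
        (AE x in M. decseq (\<lambda>n. F n x)) \<longrightarrow>
        (AE x in M. F 0 x \<le> h x) \<longrightarrow>
        (\<lambda>n. \<rho> (F n)) \<longlonglongrightarrow> \<rho> (\<lambda>x. INF n. F n x))"

definition locally_absolutely_continuous ::
  "'a measure \<Rightarrow> (('a \<Rightarrow> ennreal) \<Rightarrow> ennreal) \<Rightarrow> bool" where
  "locally_absolutely_continuous M \<rho> \<longleftrightarrow>
     (\<forall>E \<in> sets M. emeasure M E < \<infinity> \<longrightarrow> qn_absolutely_continuous M \<rho> (indicator E))"

end

theory Submission
  imports Defs
begin

text \<open>If f(\<omega>, \<theta>) depends on \<theta> only through a countably valued measurable map, then
  \<theta> \<mapsto> \<rho>(f(\<cdot>, \<theta>)) is trivially measurable. The Fatou property makes \<rho> commute with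
  increasing limits, and local absolute continuity makes it commute with decreasing limits
  dominated by C * 1_E with \<mu>(E) < \<infinity>; so measurability of the slices propagates to the
  bounded monotone class generated by such functions. That class is closed under sums,
  scalar multiples and complements C * 1_(E \<times> \<Theta>) - f, hence (Dynkin) contains the indicators
  of all product-measurable sets and then all bounded measurable functions supported in
  E \<times> \<Theta>. A general f is the increasing limit of min(k, f) * 1_(A_k \<times> \<Theta>) for an exhaustion
  (A_k) of \<Omega> by sets of finite measure, and the Fatou property passes to the limit once more.
  The claim for g follows by swapping the coordinates.\<close>

lemma INF_mult_left_ennreal:
  fixes f :: "'a \<Rightarrow> ennreal"
  assumes "c < top" "I \<noteq> {}"
  shows "c * (INF i\<in>I. f i) = (INF i\<in>I. c * f i)"
proof (cases "c = 0")
  case False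
  have "bij ((*) c)"
    by (rule bij_betw_byWitness[of _ "\<lambda>x. x / c"])
       (use False assms in
        \<open>auto simp: ennreal_times_divide ennreal_mult_divide_eq mult.commute[of c]\<close>)
  then show ?thesis
    by (subst mono_bij_Inf) (auto simp: mono_def mult_left_mono image_comp)
qed (use assms in simp)

lemma function_quasi_norm_cmult:
  assumes "function_quasi_norm M \<rho>" "f \<in> borel_measurable M" "0 \<le> t"
  shows "\<rho> (\<lambda>x. ennreal t * f x) = ennreal t * \<rho> f"
  using assms(1)[unfolded function_quasi_norm_def, THEN conjunct1] assms(2,3) by blast

lemma function_quasi_norm_mono:
  assumes "function_quasi_norm M \<rho>" "f \<in> borel_measurable M" "g \<in> borel_measurable M"
    and "\<And>x. x \<in> space M \<Longrightarrow> f x \<le> g x"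
  shows "\<rho> f \<le> \<rho> g"
proof -
  have "AE x in M. f x \<le> g x"
    using assms(4) by (rule AE_I2)
  then show ?thesis
    using assms(1)[unfolded function_quasi_norm_def, THEN conjunct2, THEN conjunct1] assms(2,3)
    by blast
qed

lemma function_quasi_norm_cong:
  assumes "function_quasi_norm M \<rho>" "f \<in> borel_measurable M" "g \<in> borel_measurable M"
    and "\<And>x. x \<in> space M \<Longrightarrow> f x = g x"
  shows "\<rho> f = \<rho> g"
  using function_quasi_norm_mono[OF assms(1,2,3)] function_quasi_norm_mono[OF assms(1,3,2)] assms(4)
  by (simp add: antisym)

lemma fatou_property_SUP:
  assumes "function_quasi_norm M \<rho>" "fatou_property M \<rho>"
    and F: "\<And>n. F n \<in> borel_measurable M"
    and inc: "\<And>x. x \<in> space M \<Longrightarrow> incseq (\<lambda>n. F n x)"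
  shows "\<rho> (\<lambda>x. SUP n. F n x) = (SUP n. \<rho> (F n))"
proof (rule antisym)
  have "AE x in M. incseq (\<lambda>n. F n x)"
    using inc by (rule AE_I2)
  then show "\<rho> (\<lambda>x. SUP n. F n x) \<le> (SUP n. \<rho> (F n))"
    using assms(2) F unfolding fatou_property_def by blast
  show "(SUP n. \<rho> (F n)) \<le> \<rho> (\<lambda>x. SUP n. F n x)"
  proof (rule SUP_least)
    fix n
    have "(\<lambda>x. SUP n. F n x) \<in> borel_measurable M"
      using F by (intro borel_measurable_SUP) auto
    then show "\<rho> (F n) \<le> \<rho> (\<lambda>x. SUP n. F n x)"
      using F by (intro function_quasi_norm_mono[OF assms(1)]) (auto intro: SUP_upper)
  qed
qed

lemma qn_absolutely_continuous_INF:
  assumes fqn: "function_quasi_norm M \<rho>" and ac: "qn_absolutely_continuous M \<rho> h"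
    and F: "\<And>n. F n \<in> borel_measurable M"
    and dec: "\<And>x. x \<in> space M \<Longrightarrow> decseq (\<lambda>n. F n x)"
    and dom: "\<And>x. x \<in> space M \<Longrightarrow> F 0 x \<le> h x"
  shows "\<rho> (\<lambda>x. INF n. F n x) = (INF n. \<rho> (F n))"
proof (rule LIMSEQ_unique)
  have "AE x in M. decseq (\<lambda>n. F n x)"
    using dec by (rule AE_I2)
  moreover have "AE x in M. F 0 x \<le> h x"
    using dom by (rule AE_I2)
  ultimately show "(\<lambda>n. \<rho> (F n)) \<longlonglongrightarrow> \<rho> (\<lambda>x. INF n. F n x)"
    using ac[unfolded qn_absolutely_continuous_def, THEN conjunct2, THEN conjunct2] F by blast
  have "decseq (\<lambda>n. \<rho> (F n))"
    using dec F by (auto simp: decseq_def intro!: function_quasi_norm_mono[OF fqn])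
  then show "(\<lambda>n. \<rho> (F n)) \<longlonglongrightarrow> (INF n. \<rho> (F n))"
    by (rule LIMSEQ_INF)
qed

lemma qn_absolutely_continuous_INF_cmult:
  assumes fqn: "function_quasi_norm M \<rho>" and ac: "qn_absolutely_continuous M \<rho> h"
    and F: "\<And>n. F n \<in> borel_measurable M"
    and dec: "\<And>x. x \<in> space M \<Longrightarrow> decseq (\<lambda>n. F n x)"
    and dom: "\<And>x. x \<in> space M \<Longrightarrow> F 0 x \<le> C * h x" and "C < top"
  shows "\<rho> (\<lambda>x. INF n. F n x) = (INF n. \<rho> (F n))"
proof -
  define c where "c = enn2real C + 1"
  have c: "0 < c"
    using enn2real_nonneg[of C] unfolding c_def by linarith
  have C: "C \<le> ennreal c"
    using \<open>C < top\<close> unfolding c_def by (cases C) (auto intro: ennreal_leI)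
  define G where "G n x = ennreal (1 / c) * F n x" for n x
  have F_eq: "F n = (\<lambda>x. ennreal c * G n x)" for n
    using c by (simp add: G_def mult.assoc[symmetric] ennreal_mult[symmetric])
  have G: "G n \<in> borel_measurable M" for n
    unfolding G_def[abs_def] using F by (intro borel_measurable_times_ennreal) auto
  have G_INF: "\<rho> (\<lambda>x. INF n. G n x) = (INF n. \<rho> (G n))"
  proof (rule qn_absolutely_continuous_INF[OF fqn ac G])
    show "decseq (\<lambda>n. G n x)" if "x \<in> space M" for x
      using dec[OF that] by (simp add: decseq_def G_def mult_left_mono)
    show "G 0 x \<le> h x" if "x \<in> space M" for x
    proof -
      have "G 0 x \<le> ennreal (1 / c) * (ennreal c * h x)"
        unfolding G_def using dom[OF that] C
        by (meson mult_left_mono mult_right_mono order_trans zero_le)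
      also have "\<dots> = h x"
        using c by (simp add: mult.assoc[symmetric] ennreal_mult[symmetric])
      finally show ?thesis .
    qed
  qed
  have "(\<lambda>x. INF n. F n x) = (\<lambda>x. ennreal c * (INF n. G n x))"
    by (simp add: F_eq INF_mult_left_ennreal)
  then have "\<rho> (\<lambda>x. INF n. F n x) = ennreal c * \<rho> (\<lambda>x. INF n. G n x)"
    using c G by (simp add: function_quasi_norm_cmult[OF fqn] borel_measurable_INF)
  also have "\<dots> = (INF n. ennreal c * \<rho> (G n))"
    by (simp add: G_INF INF_mult_left_ennreal)
  also have "\<dots> = (INF n. \<rho> (F n))"
    using c G by (simp add: F_eq function_quasi_norm_cmult[OF fqn])
  finally show ?thesis .
qed

text \<open>The uniform bound C * 1_(E \<times> \<Theta>), with E of finite measure in applications,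
  is what lets absolute continuity of \<rho> control decreasing limits.\<close>

inductive_set bounded_monotone_class ::
    "'a measure \<Rightarrow> 'b measure \<Rightarrow> 'a set \<Rightarrow> ('a \<times> 'b \<Rightarrow> ennreal) set"
  for M N E
where
  countable_cases: "p \<in> measurable N (count_space (UNIV :: nat set)) \<Longrightarrow>
    (\<And>i. h i \<in> borel_measurable M) \<Longrightarrow>
    (\<And>i \<omega>. \<omega> \<in> space M \<Longrightarrow> h i \<omega> \<le> C * indicator E \<omega>) \<Longrightarrow> C < top \<Longrightarrow>
    (\<lambda>x. h (p (snd x)) (fst x)) \<in> bounded_monotone_class M N E"
| cong: "g \<in> bounded_monotone_class M N E \<Longrightarrow>
    (\<And>x. x \<in> space M \<times> space N \<Longrightarrow> f x = g x) \<Longrightarrow> f \<in> bounded_monotone_class M N E"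
| incseq_SUP: "(\<And>n. F n \<in> bounded_monotone_class M N E) \<Longrightarrow>
    (\<And>x. x \<in> space M \<times> space N \<Longrightarrow> incseq (\<lambda>n. F n x)) \<Longrightarrow>
    (\<And>n x. x \<in> space M \<times> space N \<Longrightarrow> F n x \<le> C * indicator (E \<times> space N) x) \<Longrightarrow>
    C < top \<Longrightarrow>
    (\<lambda>x. SUP n. F n x) \<in> bounded_monotone_class M N E"
| decseq_INF: "(\<And>n. F n \<in> bounded_monotone_class M N E) \<Longrightarrow>
    (\<And>x. x \<in> space M \<times> space N \<Longrightarrow> decseq (\<lambda>n. F n x)) \<Longrightarrow>
    (\<And>n x. x \<in> space M \<times> space N \<Longrightarrow> F n x \<le> C * indicator (E \<times> space N) x) \<Longrightarrow>
    C < top \<Longrightarrow>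
    (\<lambda>x. INF n. F n x) \<in> bounded_monotone_class M N E"

lemma bounded_monotone_class_measurable:
  "f \<in> bounded_monotone_class M N E \<Longrightarrow> f \<in> borel_measurable (M \<Otimes>\<^sub>M N)"
proof (induction rule: bounded_monotone_class.induct)
  case (countable_cases p h C)
  show ?case
    by (rule measurable_compose_countable[where f="\<lambda>i x. h i (fst x)" and g="\<lambda>x. p (snd x)"])
       (use countable_cases in auto)
next
  case (cong g f)
  then show ?case
    by (subst measurable_cong[where g=g]) (auto simp: space_pair_measure)
qed auto

lemma bounded_monotone_class_bounded:
  "f \<in> bounded_monotone_class M N E \<Longrightarrow>
    \<exists>C<top. \<forall>x\<in>space M \<times> space N. f x \<le> C * indicator (E \<times> space N) x"
proof (induction rule: bounded_monotone_class.induct)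
  case (countable_cases p h C)
  then show ?case
    by (intro exI[of _ C]) (auto simp: indicator_def)
next
  case (incseq_SUP F C)
  then show ?case
    by (intro exI[of _ C]) (auto intro: SUP_least)
next
  case (decseq_INF F C)
  then show ?case
    by (intro exI[of _ C]) (auto intro: INF_lower2)
qed metis

lemma bounded_monotone_class_zero: "(\<lambda>x. 0) \<in> bounded_monotone_class M N E"
  using bounded_monotone_class.countable_cases[of "\<lambda>_. 0" N "\<lambda>_ _. 0" M 0 E] by simp

lemma bounded_monotone_class_cmult:
  assumes "f \<in> bounded_monotone_class M N E" "c < top"
  shows "(\<lambda>x. c * f x) \<in> bounded_monotone_class M N E"
  using assms(1)
proof (induction rule: bounded_monotone_class.induct)
  case (countable_cases p h C)
  show ?case
  proof (rule bounded_monotone_class.countable_cases[of p N "\<lambda>i \<omega>. c * h i \<omega>" M "c * C"])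
    show "c * h i \<omega> \<le> c * C * indicator E \<omega>" if "\<omega> \<in> space M" for i \<omega>
      using countable_cases(3)[OF that] by (simp add: mult.assoc mult_left_mono)
  qed (use countable_cases assms(2) in \<open>auto simp: ennreal_mult_less_top\<close>)
next
  case (cong g f)
  then show ?case
    by (auto intro: bounded_monotone_class.cong)
next
  case (incseq_SUP F C)
  show ?case
  proof (rule bounded_monotone_class.cong[OF
        bounded_monotone_class.incseq_SUP[of "\<lambda>n x. c * F n x" M N E "c * C"]])
    show "incseq (\<lambda>n. c * F n x)" if "x \<in> space M \<times> space N" for x
      using incseq_SUP(2)[OF that] by (simp add: incseq_def mult_left_mono)
    show "c * F n x \<le> c * C * indicator (E \<times> space N) x" if "x \<in> space M \<times> space N" for n x
      using incseq_SUP(3)[OF that] by (simp add: mult.assoc mult_left_mono)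
  qed (use incseq_SUP assms(2) in \<open>auto simp: ennreal_mult_less_top SUP_mult_left_ennreal\<close>)
next
  case (decseq_INF F C)
  show ?case
  proof (rule bounded_monotone_class.cong[OF
        bounded_monotone_class.decseq_INF[of "\<lambda>n x. c * F n x" M N E "c * C"]])
    show "decseq (\<lambda>n. c * F n x)" if "x \<in> space M \<times> space N" for x
      using decseq_INF(2)[OF that] by (simp add: decseq_def mult_left_mono)
    show "c * F n x \<le> c * C * indicator (E \<times> space N) x" if "x \<in> space M \<times> space N" for n x
      using decseq_INF(3)[OF that] by (simp add: mult.assoc mult_left_mono)
  qed (use decseq_INF assms(2) in \<open>auto simp: ennreal_mult_less_top INF_mult_left_ennreal\<close>)
qed

lemma bounded_monotone_class_const_minus:
  assumes "E \<in> sets M" "f \<in> bounded_monotone_class M N E" "c < top"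
  shows "(\<lambda>x. c * indicator (E \<times> space N) x - f x) \<in> bounded_monotone_class M N E"
  using assms(2)
proof (induction rule: bounded_monotone_class.induct)
  case (countable_cases p h C)
  show ?case
  proof (rule bounded_monotone_class.cong[OF
        bounded_monotone_class.countable_cases[of p N "\<lambda>i \<omega>. c * indicator E \<omega> - h i \<omega>" M c]])
    show "(\<lambda>\<omega>. c * indicator E \<omega> - h i \<omega>) \<in> borel_measurable M" for i
      using countable_cases(2) assms(1) by measurable
  qed (use countable_cases assms(3) in \<open>auto simp: indicator_def\<close>)
next
  case (cong g f)
  then show ?case
    by (auto intro: bounded_monotone_class.cong)
next
  case (incseq_SUP F C)
  show ?case
  proof (rule bounded_monotone_class.cong[OF
        bounded_monotone_class.decseq_INF[of "\<lambda>n x. c * indicator (E \<times> space N) x - F n x" M N E c]])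
    show "decseq (\<lambda>n. c * indicator (E \<times> space N) x - F n x)" if "x \<in> space M \<times> space N" for x
      using incseq_SUP(2)[OF that] by (simp add: incseq_def decseq_def ennreal_minus_mono)
    show "c * indicator (E \<times> space N) x - (SUP n. F n x) =
        (INF n. c * indicator (E \<times> space N) x - F n x)" for x
      using assms(3) by (intro ennreal_SUP_const_minus[symmetric]) (auto simp: indicator_def)
  qed (use incseq_SUP assms(3) in \<open>auto simp: indicator_def\<close>)
next
  case (decseq_INF F C)
  show ?case
  proof (rule bounded_monotone_class.cong[OF
        bounded_monotone_class.incseq_SUP[of "\<lambda>n x. c * indicator (E \<times> space N) x - F n x" M N E c]])
    show "incseq (\<lambda>n. c * indicator (E \<times> space N) x - F n x)" if "x \<in> space M \<times> space N" for x
      using decseq_INF(2)[OF that] by (simp add: incseq_def decseq_def ennreal_minus_mono)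
    show "c * indicator (E \<times> space N) x - (INF n. F n x) =
        (SUP n. c * indicator (E \<times> space N) x - F n x)" for x
      by (intro ennreal_INF_const_minus[symmetric]) auto
  qed (use decseq_INF assms(3) in \<open>auto simp: indicator_def\<close>)
qed

lemma bounded_monotone_class_add_SUP:
  assumes g: "g \<in> bounded_monotone_class M N E"
    and F: "\<And>n. (\<lambda>x. g x + F n x) \<in> bounded_monotone_class M N E"
    and inc: "\<And>x. x \<in> space M \<times> space N \<Longrightarrow> incseq (\<lambda>n. F n x)"
    and bnd: "\<And>n x. x \<in> space M \<times> space N \<Longrightarrow> F n x \<le> C * indicator (E \<times> space N) x" "C < top"
  shows "(\<lambda>x. g x + (SUP n. F n x)) \<in> bounded_monotone_class M N E"
proof -
  obtain D where D: "D < top"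
      "\<And>x. x \<in> space M \<times> space N \<Longrightarrow> g x \<le> D * indicator (E \<times> space N) x"
    using bounded_monotone_class_bounded[OF g] by blast
  show ?thesis
  proof (rule bounded_monotone_class.cong[OF
        bounded_monotone_class.incseq_SUP[OF F, where C = "D + C"]])
    show "incseq (\<lambda>n. g x + F n x)" if "x \<in> space M \<times> space N" for x
      using inc[OF that] by (simp add: incseq_def add_left_mono)
    show "g x + F n x \<le> (D + C) * indicator (E \<times> space N) x" if "x \<in> space M \<times> space N" for n x
      using D(2)[OF that] bnd(1)[OF that] by (simp add: distrib_right add_mono)
    show "g x + (SUP n. F n x) = (SUP n. g x + F n x)" for x
      by (simp add: ennreal_SUP_add_right)
  qed (use D bnd in auto)
qed

lemma bounded_monotone_class_add_INF:
  assumes g: "g \<in> bounded_monotone_class M N E"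
    and F: "\<And>n. (\<lambda>x. g x + F n x) \<in> bounded_monotone_class M N E"
    and dec: "\<And>x. x \<in> space M \<times> space N \<Longrightarrow> decseq (\<lambda>n. F n x)"
    and bnd: "\<And>n x. x \<in> space M \<times> space N \<Longrightarrow> F n x \<le> C * indicator (E \<times> space N) x" "C < top"
  shows "(\<lambda>x. g x + (INF n. F n x)) \<in> bounded_monotone_class M N E"
proof -
  obtain D where D: "D < top"
      "\<And>x. x \<in> space M \<times> space N \<Longrightarrow> g x \<le> D * indicator (E \<times> space N) x"
    using bounded_monotone_class_bounded[OF g] by blast
  show ?thesis
  proof (rule bounded_monotone_class.cong[OF
        bounded_monotone_class.decseq_INF[OF F, where C = "D + C"]])
    show "decseq (\<lambda>n. g x + F n x)" if "x \<in> space M \<times> space N" for x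
      using dec[OF that] by (simp add: decseq_def add_left_mono)
    show "g x + F n x \<le> (D + C) * indicator (E \<times> space N) x" if "x \<in> space M \<times> space N" for n x
      using D(2)[OF that] bnd(1)[OF that] by (simp add: distrib_right add_mono)
    show "g x + (INF n. F n x) = (INF n. g x + F n x)" for x
      by (simp add: INF_ennreal_const_add)
  qed (use D bnd in auto)
qed

lemma bounded_monotone_class_add_countable_cases:
  assumes p: "p \<in> measurable N (count_space (UNIV :: nat set))"
    and h: "\<And>i. h i \<in> borel_measurable M"
      "\<And>i \<omega>. \<omega> \<in> space M \<Longrightarrow> h i \<omega> \<le> C * indicator E \<omega>" "C < top"
    and f: "f \<in> bounded_monotone_class M N E"
  shows "(\<lambda>x. h (p (snd x)) (fst x) + f x) \<in> bounded_monotone_class M N E"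
  using f
proof (induction rule: bounded_monotone_class.induct)
  case (countable_cases q k D)
  have "(\<lambda>\<theta>. prod_encode (p \<theta>, q \<theta>)) \<in> measurable N (count_space UNIV)"
    by (rule measurable_compose_countable[where g=p and f="\<lambda>i \<theta>. prod_encode (i, q \<theta>)"])
       (use p countable_cases(1) in \<open>auto intro: measurable_compose\<close>)
  then show ?case
    using bounded_monotone_class.countable_cases[of "\<lambda>\<theta>. prod_encode (p \<theta>, q \<theta>)" N
        "\<lambda>i \<omega>. h (fst (prod_decode i)) \<omega> + k (snd (prod_decode i)) \<omega>" M "C + D" E]
      h countable_cases(2-4)
    by (auto simp: distrib_right add_mono)
next
  case (cong g f)
  then show ?case
    by (auto intro: bounded_monotone_class.cong)
next
  case (incseq_SUP F D)
  then show ?case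
    by (intro bounded_monotone_class_add_SUP bounded_monotone_class.countable_cases[OF p h(1-3)])
next
  case (decseq_INF F D)
  then show ?case
    by (intro bounded_monotone_class_add_INF bounded_monotone_class.countable_cases[OF p h(1-3)])
qed

lemma bounded_monotone_class_add:
  assumes g: "g \<in> bounded_monotone_class M N E" and f: "f \<in> bounded_monotone_class M N E"
  shows "(\<lambda>x. g x + f x) \<in> bounded_monotone_class M N E"
  using f
proof (induction rule: bounded_monotone_class.induct)
  case (countable_cases p h C)
  then show ?case
    using bounded_monotone_class_add_countable_cases[OF countable_cases g]
    by (auto intro: bounded_monotone_class.cong simp: add.commute)
next
  case (cong f' f)
  then show ?case
    by (auto intro: bounded_monotone_class.cong)
next
  case (incseq_SUP F C)
  then show ?case
    by (intro bounded_monotone_class_add_SUP g)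
next
  case (decseq_INF F C)
  then show ?case
    by (intro bounded_monotone_class_add_INF g)
qed

lemma bounded_monotone_class_sum:
  assumes "finite I" "\<And>i. i \<in> I \<Longrightarrow> F i \<in> bounded_monotone_class M N E"
  shows "(\<lambda>x. \<Sum>i\<in>I. F i x) \<in> bounded_monotone_class M N E"
  using assms
  by (induction rule: finite_induct) (auto intro: bounded_monotone_class_zero bounded_monotone_class_add)

lemma bounded_monotone_class_indicator:
  assumes E: "E \<in> sets M" and A: "A \<in> sets (M \<Otimes>\<^sub>M N)"
  shows "(\<lambda>x. indicator (A \<inter> E \<times> space N) x) \<in> bounded_monotone_class M N E"
proof -
  have generated: "A \<in> sigma_sets (space M \<times> space N) {a \<times> b | a b. a \<in> sets M \<and> b \<in> sets N}"
    using A by (simp add: sets_pair_measure)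
  have closed: "{a \<times> b | a b. a \<in> sets M \<and> b \<in> sets N} \<subseteq> Pow (space M \<times> space N)"
    using sets.sets_into_space[of _ M] sets.sets_into_space[of _ N] by blast
  from Int_stable_pair_measure_generator closed generated show ?thesis
  proof (induction rule: sigma_sets_induct_disjoint)
    case (basic A)
    then obtain a b where ab: "A = a \<times> b" "a \<in> sets M" "b \<in> sets N"
      by blast
    define h :: "nat \<Rightarrow> 'a \<Rightarrow> ennreal"
      where "h i = (if i = 1 then indicator (a \<inter> E) else (\<lambda>_. 0))" for i
    have "(\<lambda>\<theta>. if \<theta> \<in> b then 1 else 0 :: nat) \<in> measurable N (count_space UNIV)"
      using ab(3) by (intro measurable_If_set) auto
    moreover have "h i \<in> borel_measurable M" for i
      using ab(2) E by (simp add: h_def)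
    ultimately have "(\<lambda>x. h (if snd x \<in> b then 1 else 0) (fst x)) \<in> bounded_monotone_class M N E"
      by (rule bounded_monotone_class.countable_cases[where C=1]) (auto simp: h_def indicator_def)
    then show ?case
      by (rule bounded_monotone_class.cong) (auto simp: ab(1) h_def indicator_def)
  next
    case empty
    then show ?case
      using bounded_monotone_class_zero by simp
  next
    case (compl A)
    show ?case
      by (rule bounded_monotone_class.cong[OF bounded_monotone_class_const_minus[OF E compl(2), of 1]])
         (auto simp: indicator_def)
  next
    case (union A)
    let ?S = "\<lambda>n x. \<Sum>i<n. indicator (A i \<inter> E \<times> space N) x :: ennreal"
    have "disjoint_family (\<lambda>i. A i \<inter> E \<times> space N)"
      using union(1) by (auto simp: disjoint_family_on_def)
    then have sum_eq: "(\<Sum>i. indicator (A i \<inter> E \<times> space N) x :: ennreal) =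
        indicator (\<Union>i. A i \<inter> E \<times> space N) x" for x
      by (rule suminf_indicator)
    have union_eq: "indicator ((\<Union>i. A i) \<inter> E \<times> space N) x = (SUP n. ?S n x)" for x
    proof -
      have "(\<Union>i. A i) \<inter> E \<times> space N = (\<Union>i. A i \<inter> E \<times> space N)"
        by blast
      then show ?thesis
        by (simp only: sum_eq[symmetric] suminf_eq_SUP)
    qed
    show ?case
    proof (rule bounded_monotone_class.cong[OF
        bounded_monotone_class.incseq_SUP[of ?S M N E 1]])
      show "?S n \<in> bounded_monotone_class M N E" for n
        using union(3) by (intro bounded_monotone_class_sum) auto
      show "incseq (\<lambda>n. ?S n x)" for x
        by (rule incseq_sumI) simp
      show "?S n x \<le> 1 * indicator (E \<times> space N) x" for n x
      proof -
        have "?S n x \<le> indicator ((\<Union>i. A i) \<inter> E \<times> space N) x"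
          unfolding union_eq by (rule SUP_upper) simp
        also have "\<dots> \<le> 1 * indicator (E \<times> space N) x"
          by (simp add: indicator_def)
        finally show ?thesis .
      qed
    qed (use union_eq in auto)
  qed
qed

lemma bounded_monotone_class_simple_function:
  assumes E: "E \<in> sets M" and u: "simple_function (M \<Otimes>\<^sub>M N) u"
    and finite: "\<And>x. x \<in> space M \<times> space N \<Longrightarrow> u x < top"
  shows "(\<lambda>x. u x * indicator (E \<times> space N) x) \<in> bounded_monotone_class M N E"
  using u finite
proof (induction rule: simple_function_induct_nn)
  case (cong f g)
  then show ?case
    by (auto intro: bounded_monotone_class.cong simp: space_pair_measure)
next
  case (set A)
  then show ?case
    using bounded_monotone_class_indicator[OF E set(1)]
    by (auto intro: bounded_monotone_class.cong simp: indicator_def)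
next
  case (mult u c)
  consider "c = 0" | "c = top" | "0 < c" "c < top"
    using top.not_eq_extremum by fastforce
  then show ?case
  proof cases
    case 2
    then have "u x = 0" if "x \<in> space M \<times> space N" for x
      using mult.prems[OF that] by (auto simp: ennreal_top_mult split: if_splits)
    then show ?thesis
      by (auto intro: bounded_monotone_class.cong[OF bounded_monotone_class_zero])
  next
    case 3
    then have "u x < top" if "x \<in> space M \<times> space N" for x
      using mult.prems[OF that] by (auto simp: ennreal_mult_less_top)
    then show ?thesis
      using bounded_monotone_class_cmult[OF mult.IH 3(2)] by (simp add: mult.assoc)
  qed (use bounded_monotone_class_zero in simp)
next
  case (add u v)
  then have "(\<lambda>x. v x * indicator (E \<times> space N) x + u x * indicator (E \<times> space N) x)
      \<in> bounded_monotone_class M N E"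
    by (intro bounded_monotone_class_add) auto
  then show ?case
    by (simp add: distrib_right)
qed

lemma bounded_monotone_class_borel_measurable:
  assumes E: "E \<in> sets M" and f: "f \<in> borel_measurable (M \<Otimes>\<^sub>M N)"
    and bnd: "\<And>x. x \<in> space M \<times> space N \<Longrightarrow> f x \<le> C * indicator (E \<times> space N) x" "C < top"
  shows "f \<in> bounded_monotone_class M N E"
proof -
  obtain U where U: "\<And>i. simple_function (M \<Otimes>\<^sub>M N) (U i)" "incseq U" "\<And>i x. U i x < top"
      "\<And>x. (SUP i. U i x) = f x"
    using borel_measurable_implies_simple_function_sequence'[OF f] by blast
  have U_le: "U i x \<le> f x" for i x
    using SUP_upper[of i UNIV "\<lambda>i. U i x"] U(4)[of x] by simp
  let ?G = "\<lambda>i x. U i x * indicator (E \<times> space N) x"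
  show ?thesis
  proof (rule bounded_monotone_class.cong[OF
        bounded_monotone_class.incseq_SUP[of ?G M N E C]])
    show "?G i \<in> bounded_monotone_class M N E" for i
      using E U(1,3) by (rule bounded_monotone_class_simple_function)
    show "incseq (\<lambda>i. ?G i x)" for x
      by (intro monoI mult_right_mono le_funD[OF monoD[OF U(2)]]) auto
    show "?G i x \<le> C * indicator (E \<times> space N) x" if "x \<in> space M \<times> space N" for i x
      using U_le[of i x] bnd(1)[OF that] by (auto simp: indicator_def)
    show "f x = (SUP i. ?G i x)" if "x \<in> space M \<times> space N" for x
      using U(4)[of x] bnd(1)[OF that] by (auto simp: indicator_def)
  qed fact
qed

lemma measurable_quasi_norm_slice_bounded_monotone_class:
  assumes fqn: "function_quasi_norm M \<rho>" and fatou: "fatou_property M \<rho>"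
    and lac: "locally_absolutely_continuous M \<rho>"
    and E: "E \<in> sets M" "emeasure M E < \<infinity>"
    and f: "f \<in> bounded_monotone_class M N E"
  shows "(\<lambda>\<theta>. \<rho> (\<lambda>\<omega>. f (\<omega>, \<theta>))) \<in> borel_measurable N"
  using f
proof (induction rule: bounded_monotone_class.induct)
  case (countable_cases p h C)
  show ?case
    using measurable_compose[OF countable_cases(1), of "\<lambda>i. \<rho> (h i)"] by simp
next
  case (cong g f)
  have "\<rho> (\<lambda>\<omega>. f (\<omega>, \<theta>)) = \<rho> (\<lambda>\<omega>. g (\<omega>, \<theta>))" if "\<theta> \<in> space N" for \<theta>
    using cong.hyps that bounded_monotone_class.cong[OF cong.hyps]
    by (intro function_quasi_norm_cong[OF fqn] measurable_Pair1[OF bounded_monotone_class_measurable])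
       auto
  then show ?case
    using cong.IH by (simp cong: measurable_cong)
next
  case (incseq_SUP F C)
  have slice: "(\<lambda>\<omega>. F n (\<omega>, \<theta>)) \<in> borel_measurable M" if "\<theta> \<in> space N" for n \<theta>
    using bounded_monotone_class_measurable[OF incseq_SUP.hyps(1)] that by (rule measurable_Pair1)
  have "\<rho> (\<lambda>\<omega>. SUP n. F n (\<omega>, \<theta>)) = (SUP n. \<rho> (\<lambda>\<omega>. F n (\<omega>, \<theta>)))" if "\<theta> \<in> space N" for \<theta>
    using incseq_SUP.hyps(2) that by (intro fatou_property_SUP[OF fqn fatou slice]) auto
  then show ?case
    using incseq_SUP.IH by (simp cong: measurable_cong)
next
  case (decseq_INF F C)
  have slice: "(\<lambda>\<omega>. F n (\<omega>, \<theta>)) \<in> borel_measurable M" if "\<theta> \<in> space N" for n \<theta>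
    using bounded_monotone_class_measurable[OF decseq_INF.hyps(1)] that by (rule measurable_Pair1)
  have ac: "qn_absolutely_continuous M \<rho> (indicator E)"
    using lac E unfolding locally_absolutely_continuous_def by blast
  have "\<rho> (\<lambda>\<omega>. INF n. F n (\<omega>, \<theta>)) = (INF n. \<rho> (\<lambda>\<omega>. F n (\<omega>, \<theta>)))" if "\<theta> \<in> space N" for \<theta>
    using decseq_INF.hyps(2,4) decseq_INF.hyps(3)[of "(_, \<theta>)" 0] that
    by (intro qn_absolutely_continuous_INF_cmult[OF fqn ac slice, where C = C]) (auto simp: indicator_def)
  then show ?case
    using decseq_INF.IH by (simp cong: measurable_cong)
qed

lemma incseq_truncation:
  fixes y :: ennreal
  assumes "incseq A"
  shows "incseq (\<lambda>k. min (of_nat k) y * indicator (A k) x)"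
  using assms by (intro monoI mult_mono min.mono) (auto simp: mono_def indicator_def)

lemma SUP_truncation:
  fixes y :: ennreal
  assumes "incseq A" "x \<in> (\<Union>k. A k)"
  shows "(SUP k. min (of_nat k) y * indicator (A k) x) = y"
proof (rule LIMSEQ_unique[OF LIMSEQ_SUP[OF incseq_truncation[OF assms(1)]]])
  obtain k0 where "x \<in> A k0"
    using assms(2) by blast
  then have "x \<in> A k" if "k0 \<le> k" for k
    using monoD[OF assms(1) that] by blast
  then have "eventually (\<lambda>k. min (of_nat k) y * indicator (A k) x = min (of_nat k) y) sequentially"
    unfolding eventually_sequentially by (intro exI[of _ k0]) (auto simp: indicator_def)
  moreover have "(\<lambda>k. min (of_nat k) y) \<longlonglongrightarrow> min top y"
    by (intro tendsto_min of_nat_tendsto_top_ennreal tendsto_const)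
  ultimately show "(\<lambda>k. min (of_nat k) y * indicator (A k) x) \<longlonglongrightarrow> y"
    by (simp add: tendsto_cong)
qed

lemma measurable_quasi_norm_slice:
  assumes "sigma_finite_measure M"
    and fqn: "function_quasi_norm M \<rho>" and fatou: "fatou_property M \<rho>"
    and lac: "locally_absolutely_continuous M \<rho>"
    and f: "f \<in> borel_measurable (M \<Otimes>\<^sub>M N)"
  shows "(\<lambda>\<theta>. \<rho> (\<lambda>\<omega>. f (\<omega>, \<theta>))) \<in> borel_measurable N"
proof -
  obtain A :: "nat \<Rightarrow> 'a set" where A: "range A \<subseteq> sets M" "(\<Union>i. A i) = space M"
      "\<And>i. emeasure M (A i) \<noteq> \<infinity>" "incseq A"
    using sigma_finite_measure.sigma_finite_incseq[OF assms(1)] by metis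
  have incseq_A: "incseq (\<lambda>k. A k \<times> space N)"
    using A(4) by (auto simp: mono_def)
  define g where "g k x = min (of_nat k) (f x) * indicator (A k \<times> space N) x" for k x
  have g: "g k \<in> borel_measurable (M \<Otimes>\<^sub>M N)" for k
    using f A(1) unfolding g_def[abs_def] by measurable
  have "g k \<in> bounded_monotone_class M N (A k)" for k
    using A(1) g by (intro bounded_monotone_class_borel_measurable[where C = "of_nat k"])
      (auto simp: g_def indicator_def of_nat_less_top)
  then have g_slice: "(\<lambda>\<theta>. \<rho> (\<lambda>\<omega>. g k (\<omega>, \<theta>))) \<in> borel_measurable N" for k
    using A(1,3)
    by (intro measurable_quasi_norm_slice_bounded_monotone_class[OF fqn fatou lac, of "A k"])
      (auto simp: less_top)
  have "\<rho> (\<lambda>\<omega>. f (\<omega>, \<theta>)) = (SUP k. \<rho> (\<lambda>\<omega>. g k (\<omega>, \<theta>)))" if "\<theta> \<in> space N" for \<theta>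
  proof -
    have "f (\<omega>, \<theta>) = (SUP k. g k (\<omega>, \<theta>))" if "\<omega> \<in> space M" for \<omega>
      unfolding g_def using \<open>\<theta> \<in> space N\<close> that A(2)
      by (intro SUP_truncation[OF incseq_A, symmetric]) auto
    then have "\<rho> (\<lambda>\<omega>. f (\<omega>, \<theta>)) = \<rho> (\<lambda>\<omega>. SUP k. g k (\<omega>, \<theta>))"
      using that by (intro function_quasi_norm_cong[OF fqn] measurable_Pair1[OF f]
          borel_measurable_SUP measurable_Pair1[OF g]) auto
    also have "\<dots> = (SUP k. \<rho> (\<lambda>\<omega>. g k (\<omega>, \<theta>)))"
      unfolding g_def using that
      by (intro fatou_property_SUP[OF fqn fatou] measurable_Pair1[OF g[unfolded g_def]]
          incseq_truncation[OF incseq_A])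
    finally show ?thesis .
  qed
  then show ?thesis
    using g_slice by (simp cong: measurable_cong)
qed

theorem proposition3p38:
  fixes M :: "'a measure" and N :: "'b measure"
    and \<rho> :: "('a \<Rightarrow> ennreal) \<Rightarrow> ennreal"
    and f :: "'a \<times> 'b \<Rightarrow> ennreal" and g :: "'b \<times> 'a \<Rightarrow> ennreal"
  assumes "sigma_finite_measure M" and "sigma_finite_measure N"
    and "function_quasi_norm M \<rho>" and "fatou_property M \<rho>"
    and "locally_absolutely_continuous M \<rho>"
    and "f \<in> borel_measurable (M \<Otimes>\<^sub>M N)"
    and "g \<in> borel_measurable (N \<Otimes>\<^sub>M M)"
  shows "(\<lambda>\<theta>. \<rho> (\<lambda>\<omega>. f (\<omega>, \<theta>))) \<in> borel_measurable N \<and>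
         (\<lambda>\<theta>. \<rho> (\<lambda>\<omega>. g (\<theta>, \<omega>))) \<in> borel_measurable N"
proof
  show "(\<lambda>\<theta>. \<rho> (\<lambda>\<omega>. f (\<omega>, \<theta>))) \<in> borel_measurable N"
    using assms(1,3-6) by (rule measurable_quasi_norm_slice)
  have "(\<lambda>x. g (snd x, fst x)) \<in> borel_measurable (M \<Otimes>\<^sub>M N)"
    using assms(7) by measurable
  from measurable_quasi_norm_slice[OF assms(1,3-5) this]
  show "(\<lambda>\<theta>. \<rho> (\<lambda>\<omega>. g (\<theta>, \<omega>))) \<in> borel_measurable N"
    by simp
qed

end
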